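(* Let $D$ be an integral domain and let $S\subseteq R(D)$ be a union of prime ideals of $R(D)$. Set $L(S):=\{0\neq x\in D\mid \frac1x\notin S\}\cup\{0\}$. Then $L(S)$ is both a subring of $D$ and a regular factroid of $D$.
   Context: For an integral domain $D$ with fraction field $F$, the reciprocal complement $R(D)$ is the subring of $F$ generated by all $1/d$, $d\in D\setminus\{0\}$. A factroid of $D$ is an additive subgroup $H$ of $D$ such that whenever $f,g\in D\setminus\{0\}$ with $fg\in H$, then $f,g\in H$. For $S\subseteq D$, $[S]_D$ is the smallest factroid of $D$ containing $S$. A factroid $H$ is regular if $\{y\in D\mid gy\in[gH]_D\}=H$ for every nonzero $g\in D$. *)

theory Defs
  imports "HOL-Computational_Algebra.Fraction_Field"
begin

text \<open>The integral domain D is the type 'a :: idom; its fraction field is 'a fract,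
  with D embedded via d maps to Fract d 1, so 1/d is Fract 1 d.\<close>

inductive_set subring_gen :: "'b::comm_ring_1 set \<Rightarrow> 'b set" for X where
  gen: "x \<in> X \<Longrightarrow> x \<in> subring_gen X"
| one: "1 \<in> subring_gen X"
| add: "x \<in> subring_gen X \<Longrightarrow> y \<in> subring_gen X \<Longrightarrow> x + y \<in> subring_gen X"
| neg: "x \<in> subring_gen X \<Longrightarrow> - x \<in> subring_gen X"
| mult: "x \<in> subring_gen X \<Longrightarrow> y \<in> subring_gen X \<Longrightarrow> x * y \<in> subring_gen X"

definition recip_compl :: "('a::idom) fract set" where
  "recip_compl = subring_gen {Fract 1 d | d. d \<noteq> 0}"

definition is_subring :: "'b::comm_ring_1 set \<Rightarrow> bool" where
  "is_subring A \<longleftrightarrow> 0 \<in> A \<and> 1 \<in> A \<and> (\<forall>x\<in>A. \<forall>y\<in>A. x + y \<in> A \<and> - x \<in> A \<and> x * y \<in> A)"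

definition is_prime_ideal_in :: "'b::comm_ring_1 set \<Rightarrow> 'b set \<Rightarrow> bool" where
  "is_prime_ideal_in R P \<longleftrightarrow> P \<subseteq> R \<and> 0 \<in> P \<and> (\<forall>x\<in>P. \<forall>y\<in>P. x + y \<in> P \<and> - x \<in> P)
     \<and> (\<forall>r\<in>R. \<forall>x\<in>P. r * x \<in> P) \<and> P \<noteq> R
     \<and> (\<forall>a\<in>R. \<forall>b\<in>R. a * b \<in> P \<longrightarrow> a \<in> P \<or> b \<in> P)"

definition is_add_subgroup :: "'b::ab_group_add set \<Rightarrow> bool" where
  "is_add_subgroup H \<longleftrightarrow> 0 \<in> H \<and> (\<forall>x\<in>H. \<forall>y\<in>H. x + y \<in> H \<and> - x \<in> H)"

text \<open>Factroid of the integral domain 'a (the whole type).\<close>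
definition factroid :: "'a::idom set \<Rightarrow> bool" where
  "factroid H \<longleftrightarrow> is_add_subgroup H \<and>
     (\<forall>f g. f \<noteq> 0 \<longrightarrow> g \<noteq> 0 \<longrightarrow> f * g \<in> H \<longrightarrow> f \<in> H \<and> g \<in> H)"

definition factroid_gen :: "'a::idom set \<Rightarrow> 'a set" where
  "factroid_gen S = \<Inter>{H. factroid H \<and> S \<subseteq> H}"

definition regular_factroid :: "'a::idom set \<Rightarrow> bool" where
  "regular_factroid H \<longleftrightarrow> factroid H \<and>
     (\<forall>g. g \<noteq> 0 \<longrightarrow> {y. g * y \<in> factroid_gen ((\<lambda>h. g * h) ` H)} = H)"

definition L_set :: "('a::idom) fract set \<Rightarrow> 'a set" where
  "L_set S = {x. x \<noteq> 0 \<and> Fract 1 x \<notin> S} \<union> {0}"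

end

theory Submission
  imports Defs
begin

text \<open>
  For a prime ideal P of R = R(D) and 0 \<noteq> x \<in> D, one has 1/x \<notin> P iff x lies in the
  localization R_P. Hence L(S) = D \<inter> A, where A is the intersection of the R_P over the
  primes P whose union is S, a subring of the fraction field containing R(D).
  For every such A, D \<inter> A is a subring, and for g \<noteq> 0 the set {z \<in> D. z/g \<in> A} is a
  factroid (since 1/h \<in> A for all h \<noteq> 0) containing g(D \<inter> A); so it contains
  [g(D \<inter> A)], and g y \<in> [g(D \<inter> A)] forces y \<in> A.
\<close>

lemma is_subring_subring_gen: "is_subring (subring_gen X)"
proof -
  have "1 + - 1 \<in> subring_gen X"
    by (intro subring_gen.add subring_gen.neg subring_gen.one)
  then show ?thesis
    unfolding is_subring_def by (auto intro: subring_gen.intros)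
qed

lemma is_subring_recip_compl: "is_subring recip_compl"
  unfolding recip_compl_def by (rule is_subring_subring_gen)

lemma Fract_1_in_recip_compl: "d \<noteq> 0 \<Longrightarrow> Fract 1 d \<in> recip_compl"
  unfolding recip_compl_def by (rule subring_gen.gen) auto

lemma is_subring_Inter: "(\<And>A. A \<in> \<A> \<Longrightarrow> is_subring A) \<Longrightarrow> is_subring (\<Inter>\<A>)"
  unfolding is_subring_def by blast

lemma one_notin_prime_ideal:
  assumes "is_prime_ideal_in R P" "1 \<in> R"
  shows "1 \<notin> P"
proof
  assume "1 \<in> P"
  then have "R \<subseteq> P"
    using assms(1) unfolding is_prime_ideal_in_def by (metis mult.right_neutral subsetI)
  with assms(1) show False
    unfolding is_prime_ideal_in_def by blast
qed

definition localization :: "'b::field set \<Rightarrow> 'b set \<Rightarrow> 'b set" where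
  "localization R P = {r / s | r s. r \<in> R \<and> s \<in> R \<and> s \<notin> P}"

lemma subset_localization:
  assumes "is_subring R" "is_prime_ideal_in R P"
  shows "R \<subseteq> localization R P"
proof
  fix r assume "r \<in> R"
  moreover have "1 \<in> R" "1 \<notin> P"
    using assms one_notin_prime_ideal unfolding is_subring_def by blast+
  ultimately show "r \<in> localization R P"
    unfolding localization_def by force
qed

lemma is_subring_localization:
  assumes R: "is_subring R" and P: "is_prime_ideal_in R P"
  shows "is_subring (localization R P)"
proof -
  have nonzero: "s \<noteq> 0" if "s \<notin> P" for s
    using P that unfolding is_prime_ideal_in_def by blast
  have denom: "s1 * s2 \<in> R \<and> s1 * s2 \<notin> P" if "s1 \<in> R" "s1 \<notin> P" "s2 \<in> R" "s2 \<notin> P" for s1 s2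
    using R P that unfolding is_subring_def is_prime_ideal_in_def by blast
  have closed: "x + y \<in> localization R P \<and> - x \<in> localization R P \<and> x * y \<in> localization R P"
    if xy: "x \<in> localization R P" "y \<in> localization R P" for x y
  proof -
    obtain r1 s1 where x: "x = r1 / s1" "r1 \<in> R" "s1 \<in> R" "s1 \<notin> P"
      using xy(1) unfolding localization_def by blast
    obtain r2 s2 where y: "y = r2 / s2" "r2 \<in> R" "s2 \<in> R" "s2 \<notin> P"
      using xy(2) unfolding localization_def by blast
    have "s1 \<noteq> 0" "s2 \<noteq> 0"
      using nonzero x(4) y(4) by blast+
    then have "x + y = (r1 * s2 + r2 * s1) / (s1 * s2)" "- x = (- r1) / s1" "x * y = (r1 * r2) / (s1 * s2)"
      using x(1) y(1) by (simp_all add: add_frac_eq)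
    moreover have "r1 * s2 + r2 * s1 \<in> R" "- r1 \<in> R" "r1 * r2 \<in> R"
      using R x y unfolding is_subring_def by blast+
    ultimately show ?thesis
      using denom[OF x(3,4) y(3,4)] x unfolding localization_def by blast
  qed
  have "0 \<in> localization R P" "1 \<in> localization R P"
    using R subset_localization[OF R P] unfolding is_subring_def by blast+
  with closed show ?thesis
    unfolding is_subring_def by blast
qed

lemma inverse_in_localization_iff:
  assumes R: "is_subring R" and P: "is_prime_ideal_in R P" and u: "u \<in> R" "u \<noteq> 0"
  shows "inverse u \<in> localization R P \<longleftrightarrow> u \<notin> P"
proof
  assume "inverse u \<in> localization R P"
  then obtain r s where rs: "inverse u = r / s" "r \<in> R" "s \<in> R" "s \<notin> P"
    unfolding localization_def by blast
  have "s \<noteq> 0"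
    using P rs(4) unfolding is_prime_ideal_in_def by blast
  then have "s = u * r"
    using rs(1) u(2) by (simp add: field_simps)
  then show "u \<notin> P"
    using P rs(2,4) unfolding is_prime_ideal_in_def by (metis mult.commute)
next
  assume "u \<notin> P"
  moreover have "1 \<in> R"
    using R unfolding is_subring_def by blast
  ultimately show "inverse u \<in> localization R P"
    using u unfolding localization_def by (force simp: inverse_eq_divide)
qed

lemma Fract_mult_cancel_left: "g \<noteq> 0 \<Longrightarrow> Fract (g * y) g = Fract y (1::'a::idom)"
  using mult_fract_cancel[of g y 1] by simp

lemma Fract_add_left: "g \<noteq> 0 \<Longrightarrow> Fract (x + y) g = Fract x g + Fract (y::'a::idom) g"
  using mult_fract_cancel[of g "x + y" g] by (simp add: algebra_simps)

lemma Fract_uminus_left: "Fract (- x) g = - Fract (x::'a::idom) g"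
  by simp

lemma Fract_mult_1: "Fract (x * y) 1 = Fract x 1 * Fract (y::'a::idom) 1"
  by simp

lemma is_subring_contraction:
  "is_subring A \<Longrightarrow> is_subring {y :: 'a::idom. Fract y 1 \<in> A}"
  unfolding is_subring_def mem_Collect_eq
  by (simp only: Fract_add_left[OF one_neq_zero] Fract_uminus_left Fract_mult_1 fract_collapse)
    blast

lemma factroid_multiples_in_overring:
  fixes A :: "'a::idom fract set"
  assumes A: "is_subring A" "recip_compl \<subseteq> A" and g: "g \<noteq> 0"
  shows "factroid {z. Fract z g \<in> A}"
proof -
  have subgroup: "is_add_subgroup {z. Fract z g \<in> A}"
    using A(1) unfolding is_add_subgroup_def is_subring_def mem_Collect_eq
    by (simp only: Fract_add_left[OF g] Fract_uminus_left fract_collapse) blast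
  have cancel: "f \<in> {z. Fract z g \<in> A}" if "f * h \<in> {z. Fract z g \<in> A}" "h \<noteq> 0" for f h
  proof -
    have "Fract f g = Fract (f * h) g * Fract 1 h"
      using that(2) mult_fract_cancel[of h f g] by (simp add: ac_simps)
    moreover have "Fract 1 h \<in> A"
      using A(2) Fract_1_in_recip_compl[OF that(2)] by blast
    ultimately show ?thesis
      using A(1) that(1) unfolding is_subring_def mem_Collect_eq by metis
  qed
  show ?thesis
    unfolding factroid_def using subgroup cancel by (metis mult.commute)
qed

lemma subset_factroid_gen: "S \<subseteq> factroid_gen S"
  unfolding factroid_gen_def by blast

lemma factroid_gen_least: "factroid H \<Longrightarrow> S \<subseteq> H \<Longrightarrow> factroid_gen S \<subseteq> H"
  unfolding factroid_gen_def by blast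

lemma regular_factroid_contraction:
  fixes A :: "'a::idom fract set"
  assumes A: "is_subring A" "recip_compl \<subseteq> A"
  shows "regular_factroid {y. Fract y 1 \<in> A}" (is "regular_factroid ?L")
proof -
  have "{y. g * y \<in> factroid_gen ((\<lambda>h. g * h) ` ?L)} \<subseteq> ?L" if g: "g \<noteq> 0" for g
  proof -
    have "(\<lambda>h. g * h) ` ?L \<subseteq> {z. Fract z g \<in> A}"
      using g by (simp add: image_subset_iff Fract_mult_cancel_left)
    then have "factroid_gen ((\<lambda>h. g * h) ` ?L) \<subseteq> {z. Fract z g \<in> A}"
      by (intro factroid_gen_least factroid_multiples_in_overring A g)
    then have "Fract y 1 \<in> A" if "g * y \<in> factroid_gen ((\<lambda>h. g * h) ` ?L)" for y
      using that Fract_mult_cancel_left[OF g, of y] by (metis mem_Collect_eq subsetD)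
    then show ?thesis
      by blast
  qed
  moreover have "?L \<subseteq> {y. g * y \<in> factroid_gen ((\<lambda>h. g * h) ` ?L)}" for g
    using subset_factroid_gen[of "(\<lambda>h. g * h) ` ?L"] by blast
  moreover have "factroid ?L"
    using factroid_multiples_in_overring[OF A one_neq_zero] .
  ultimately show ?thesis
    unfolding regular_factroid_def by blast
qed

lemma L_set_Union_prime_ideals:
  assumes "\<And>P. P \<in> \<P> \<Longrightarrow> is_prime_ideal_in recip_compl P"
  shows "L_set (\<Union>\<P>) = {y :: 'a::idom. Fract y 1 \<in> (\<Inter>P\<in>\<P>. localization recip_compl P)}"
proof -
  have local: "Fract x 1 \<in> localization recip_compl P \<longleftrightarrow> Fract 1 x \<notin> P"
    if "P \<in> \<P>" "x \<noteq> 0" for x :: 'a and P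
  proof -
    have "Fract 1 x \<noteq> 0"
      using that(2) by (simp add: Zero_fract_def eq_fract)
    then show ?thesis
      using inverse_in_localization_iff[OF is_subring_recip_compl assms[OF that(1)]
          Fract_1_in_recip_compl[OF that(2)]] by simp
  qed
  have zero: "0 \<in> localization recip_compl P" if "P \<in> \<P>" for P
    using is_subring_localization[OF is_subring_recip_compl assms[OF that]]
    unfolding is_subring_def by blast
  show ?thesis
    unfolding L_set_def using local zero by (auto simp: fract_collapse)
qed

theorem mainTheorem15:
  fixes S :: "('a::idom) fract set"
  assumes "S \<subseteq> recip_compl"
    and "\<exists>\<P>. (\<forall>P\<in>\<P>. is_prime_ideal_in (recip_compl :: 'a fract set) P) \<and> S = \<Union>\<P>"
  shows "is_subring (L_set S) \<and> regular_factroid (L_set S)"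
proof -
  obtain \<P> where primes: "\<And>P. P \<in> \<P> \<Longrightarrow> is_prime_ideal_in (recip_compl :: 'a fract set) P"
    and S: "S = \<Union>\<P>"
    using assms(2) by blast
  define A where "A = (\<Inter>P\<in>\<P>. localization recip_compl P)"
  have "is_subring A"
    unfolding A_def
    by (rule is_subring_Inter) (auto intro: is_subring_localization is_subring_recip_compl primes)
  moreover have "recip_compl \<subseteq> A"
    unfolding A_def using subset_localization[OF is_subring_recip_compl primes] by blast
  moreover have "L_set S = {y. Fract y 1 \<in> A}"
    unfolding S A_def using primes by (rule L_set_Union_prime_ideals)
  ultimately show ?thesis
    by (simp add: is_subring_contraction regular_factroid_contraction)
qed

end
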